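(* Let $u$ be a harmonic function on $V_m$, i.e. $H_m u(p)=0$ for every $p\in V_m\setminus V_0$. If, for each $w\in W_m$, $T_w=\{p_{w0},p_{w1},p_{w2}\}$ is a minimal cell in $V_m$, and we extend $u$ to $T_{w1}\cup T_{w2}$ with \[ u(p_{w10}) = \Big(1 - \frac{1}{h^2}\Big) u(p_{w1}) + \frac{1}{h^2} u(p_{w2}),\qquad u(p_{w20}) = u(p_{w10}), \] then $u$ is harmonic in $V_{m+1}$, i.e. $H_{m+1}u(p)=0$ for every $p\in V_{m+1}\setminus V_0$.
   Context: The Hata tree set is the unique compact $K\subset\mathbb{C}$ with $K=F_1(K)\cup F_2(K)$, where $F_1(z)=\alpha\bar z$, $F_2(z)=(1-|\alpha|^2)\bar z+|\alpha|^2$, and $0<|\alpha|,|1-\alpha|<1$. The boundary is $V_0=\{p_0,p_1,p_2\}=\{\alpha,0,1\}$. For a word $w=w_1\cdots w_m\in W_m=\{1,2\}^m$, $F_w=F_{w_1}\circ\cdots\circ F_{w_m}$, $p_{wi}=F_w(p_i)$, and $V_m=\bigcup_{w\in W_m}F_w(V_0)$; note $p_0=p_{12}$ and $|\alpha|^2=p_{10}=p_{21}$. A minimal cell in $V_m$ is $T_w=\{p_{w0},p_{w1},p_{w2}\}$ with $w\in W_m$; as points of $V_{m+1}$, $T_w=\{p_{w12},p_{w11},p_{w22}\}$, and $K_w\cap V_{m+1}=T_{w1}\cup T_{w2}$ with new points $p_{w10}=p_{w21}$ and $p_{w20}$. For a parameter $h>1$, the harmonic structure is given by the Laplacian on $V_0$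 (basis $\chi_\alpha,\chi_0,\chi_1$) \[ D=\begin{pmatrix}-h&h&0\\ h&-(h+1)&1\\ 0&1&-1\end{pmatrix}, \] with resistance renormalization factors $r_1=1/h$, $r_2=1-1/h^2$, and $r_w=r_{w_1}\cdots r_{w_m}$. The discrete Laplacians $H_m$ on $V_m$ are $H_m=\sum_{w\in W_m}\frac{1}{r_w}R_w^tDR_w$ (with $R_w u=u\circ F_w|_{V_0}$); explicitly, at $p=p_{w1}=p_{w'0}$, $H_mf(p)=\frac{1}{r_w}\big(f(p_{w2})-f(p_{w1})+h(f(p_{w0})-f(p_{w1}))\big)+\frac{h}{r_{w'}}\big(f(p_{w'1})-f(p_{w'0})\big)$; at $p=p_{w1}=p_{w'2}$, $H_mf(p)=\frac{1}{r_w}\big(f(p_{w2})-f(p_{w1})+h(f(p_{w0})-f(p_{w1}))\big)+\frac{1}{r_{w'}}\big(f(p_{w'1})-f(p_{w'2})\big)$; at $p=p_{w0}$ in no other cell, $H_mf(p)=\frac{h}{r_w}(f(p_{w1})-f(p_{w0}))$; at $p=p_{w2}$ in no other cell, $H_mf(p)=\frac{1}{r_w}(f(p_{w1})-f(p_{w2}))$. *)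

theory Defs
  imports Complex_Main
begin

definition hataF :: "complex \<Rightarrow> nat \<Rightarrow> complex \<Rightarrow> complex" where
  "hataF \<alpha> i z = (if i = 1 then \<alpha> * cnj z
                   else complex_of_real (1 - (cmod \<alpha>)\<^sup>2) * cnj z + complex_of_real ((cmod \<alpha>)\<^sup>2))"

definition words :: "nat \<Rightarrow> nat list set" where
  "words m = {w. length w = m \<and> set w \<subseteq> {1, 2}}"

fun hataFw :: "complex \<Rightarrow> nat list \<Rightarrow> complex \<Rightarrow> complex" where
  "hataFw \<alpha> [] = id"
| "hataFw \<alpha> (i # w) = hataF \<alpha> i \<circ> hataFw \<alpha> w"

definition bpt :: "complex \<Rightarrow> nat \<Rightarrow> complex" where
  "bpt \<alpha> j = (if j = 0 then \<alpha> else if j = 1 then 0 else 1)"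

definition pw :: "complex \<Rightarrow> nat list \<Rightarrow> nat \<Rightarrow> complex" where
  "pw \<alpha> w j = hataFw \<alpha> w (bpt \<alpha> j)"

definition Vm :: "complex \<Rightarrow> nat \<Rightarrow> complex set" where
  "Vm \<alpha> m = (\<Union>w\<in>words m. pw \<alpha> w ` {0, 1, 2})"

definition rfac :: "real \<Rightarrow> nat \<Rightarrow> real" where
  "rfac h i = (if i = 1 then 1 / h else 1 - 1 / h\<^sup>2)"

definition rw :: "real \<Rightarrow> nat list \<Rightarrow> real" where
  "rw h w = prod_list (map (rfac h) w)"

text \<open>The matrix D on V_0 (indices 0,1,2 correspond to alpha, 0, 1).\<close>
definition Dmat :: "real \<Rightarrow> nat \<Rightarrow> nat \<Rightarrow> real" where
  "Dmat h i j =
     (if i = 0 \<and> j = 0 then - h else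
      if (i = 0 \<and> j = 1) \<or> (i = 1 \<and> j = 0) then h else
      if i = 1 \<and> j = 1 then - (h + 1) else
      if (i = 1 \<and> j = 2) \<or> (i = 2 \<and> j = 1) then 1 else
      if i = 2 \<and> j = 2 then -1 else 0)"

text \<open>H_m = sum_w (1/r_w) R_w^t D R_w, evaluated at the point p.\<close>
definition Hm :: "complex \<Rightarrow> real \<Rightarrow> nat \<Rightarrow> (complex \<Rightarrow> real) \<Rightarrow> complex \<Rightarrow> real" where
  "Hm \<alpha> h m f p =
     (\<Sum>w\<in>words m. (1 / rw h w) *
        (\<Sum>i<3. (if pw \<alpha> w i = p then (\<Sum>j<3. Dmat h i j * f (pw \<alpha> w j)) else 0)))"

definition harmonic_on_Vm :: "complex \<Rightarrow> real \<Rightarrow> nat \<Rightarrow> (complex \<Rightarrow> real) \<Rightarrow> bool" where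
  "harmonic_on_Vm \<alpha> h m u \<longleftrightarrow> (\<forall>p \<in> Vm \<alpha> m - Vm \<alpha> 0. Hm \<alpha> h m u p = 0)"

end

theory Submission imports Defs begin

text \<open>
  Read \<open>T\<^sub>w\<close> as a resistor network with edges \<open>p\<^sub>w\<^sub>0p\<^sub>w\<^sub>1\<close> of resistance \<open>r\<^sub>w/h\<close> and
  \<open>p\<^sub>w\<^sub>1p\<^sub>w\<^sub>2\<close> of resistance \<open>r\<^sub>w\<close>. After refinement the first edge reappears unchanged as
  \<open>p\<^sub>w\<^sub>1\<^sub>2p\<^sub>w\<^sub>1\<^sub>1\<close>, the second is split into \<open>p\<^sub>w\<^sub>1\<^sub>1p\<^sub>w\<^sub>1\<^sub>0\<close> and \<open>p\<^sub>w\<^sub>2\<^sub>1p\<^sub>w\<^sub>2\<^sub>2\<close> in series, of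
  resistances \<open>r\<^sub>w/h\<^sup>2\<close> and \<open>r\<^sub>w(1 - 1/h\<^sup>2)\<close>, and \<open>p\<^sub>w\<^sub>2\<^sub>0\<close> hangs off \<open>p\<^sub>w\<^sub>1\<^sub>0\<close> by a single edge.
  The prescribed values are the voltage-divider value at \<open>p\<^sub>w\<^sub>1\<^sub>0\<close> and the value that makes the
  dangling edge currentless, so every cell contributes the same to the Laplacian at every point
  before and after refinement, i.e. \<open>H\<^sub>m\<^sub>+\<^sub>1 u = H\<^sub>m u\<close> pointwise. On \<open>V\<^sub>m\<close> this vanishes by
  hypothesis, and off \<open>V\<^sub>m\<close> no cell of level \<open>m\<close> contributes at all.
\<close>

lemma hataFw_append: "hataFw a (w @ v) = hataFw a w \<circ> hataFw a v"
  by (induction w) auto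

lemma pw_snoc: "pw a (w @ [k]) j = hataFw a w (hataF a k (bpt a j))"
  by (simp add: pw_def hataFw_append)

lemma rw_snoc: "rw h (w @ [k]) = rw h w * rfac h k"
  by (simp add: rw_def)

lemma words_Suc: "words (Suc m) = (\<lambda>w. w @ [1]) ` words m \<union> (\<lambda>w. w @ [2]) ` words m"
proof (intro set_eqI iffI)
  fix v assume "v \<in> words (Suc m)"
  then show "v \<in> (\<lambda>w. w @ [1]) ` words m \<union> (\<lambda>w. w @ [2]) ` words m"
    by (cases v rule: rev_cases) (auto simp: words_def)
qed (auto simp: words_def)

lemma finite_words: "finite (words m)"
  using finite_lists_length_eq[of "{1::nat, 2}" m]
  by (simp add: words_def conj_commute)

lemma inj_hataF:
  assumes "a \<noteq> 0" and "cmod a \<noteq> 1"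
  shows "inj (hataF a i)"
proof -
  have "(cmod a)\<^sup>2 \<noteq> 1"
    using assms(2) by (simp add: abs_square_eq_1)
  then have "complex_of_real (1 - (cmod a)\<^sup>2) \<noteq> 0"
    by (metis of_real_eq_0_iff right_minus_eq)
  then show ?thesis
    using assms(1) by (intro injI) (auto simp: hataF_def split: if_splits)
qed

lemma inj_hataFw:
  assumes "a \<noteq> 0" and "cmod a \<noteq> 1"
  shows "inj (hataFw a w)"
  by (induction w) (simp_all only: hataFw.simps inj_on_id inj_compose inj_hataF[OF assms])

lemma rw_nonzero:
  assumes "h > 1"
  shows "rw h w \<noteq> 0"
proof -
  have "h\<^sup>2 \<noteq> 1"
    using assms by (simp add: abs_square_eq_1)
  then have "rfac h k \<noteq> 0" for k
    using assms by (simp add: rfac_def)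
  then show ?thesis
    unfolding rw_def by (induction w) auto
qed

lemma level1_points_distinct:
  assumes "0 < cmod a" "cmod a < 1" "0 < cmod (1 - a)" "cmod (1 - a) < 1"
  shows "distinct [a, 0, 1, hataF a 1 a, hataF a 2 a]"
proof -
  obtain x y where a: "a = Complex x y"
    by (cases a)
  define r where "r = x\<^sup>2 + y\<^sup>2"
  define q where "q = hataF a 1 a"
  define s where "s = hataF a 2 a"
  have norm_sq: "(cmod a)\<^sup>2 = r"
    by (simp add: a r_def cmod_power2)
  have r: "0 < r" "r < 1"
    using assms(1,2) norm_sq by (metis zero_less_power2 less_irrefl, metis abs_norm_cancel abs_square_less_1)
  have q_eq: "q = Complex r 0"
    by (simp add: q_def hataF_def a r_def complex_eq_iff power2_eq_square)
  have s_eq: "s = Complex ((1 - r) * x + r) (- (1 - r) * y)"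
    by (simp add: s_def hataF_def norm_sq[unfolded a] a complex_eq_iff algebra_simps)
  have "(1 - x)\<^sup>2 < 1"
    using assms(4) by (simp add: a cmod_def) (smt (verit) zero_le_power2)
  then have "0 < x"
    using power_less_imp_less_base[of "1 - x" 2 1] by simp
  have y_eq_0: "y = 0" if "- (1 - r) * y = y \<or> (1 - r) * y = 0"
    using that r by (auto simp: algebra_simps)
  have x_eq_1: "x = 1" if "(1 - r) * x + r = 1 \<or> (1 - r) * x + r = x"
  proof -
    have "(1 - r) * x + r - 1 = (1 - r) * (x - 1)" "(1 - r) * x + r - x = r * (1 - x)"
      by (simp_all add: algebra_simps)
    then show ?thesis
      using that r by auto
  qed
  have "a \<noteq> 0" "a \<noteq> 1"
    using assms(1,3) by auto
  moreover have "a \<noteq> q"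
  proof
    assume "a = q"
    then have "r\<^sup>2 = r"
      using norm_sq q_eq by (simp add: cmod_power2)
    then show False
      using r by (simp add: power2_eq_square)
  qed
  moreover have "q \<noteq> 0" "q \<noteq> 1"
    using r by (simp_all add: q_eq complex_eq_iff)
  moreover have "s \<noteq> 0"
  proof -
    have "0 < (1 - r) * x + r"
      using \<open>0 < x\<close> r by (intro add_pos_pos mult_pos_pos) simp_all
    then show ?thesis
      by (simp add: s_eq complex_eq_iff)
  qed
  moreover have "s \<noteq> 1"
  proof
    assume "s = 1"
    then have "(1 - r) * x + r = 1" "(1 - r) * y = 0"
      by (simp_all add: s_eq complex_eq_iff)
    then have "x = 1" "y = 0"
      using x_eq_1 y_eq_0 by blast+
    then show False
      using \<open>a \<noteq> 1\<close> by (simp add: a complex_eq_iff)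
  qed
  moreover have "s \<noteq> a"
  proof
    assume "s = a"
    then have "(1 - r) * x + r = x" "- (1 - r) * y = y"
      by (simp_all add: s_eq a)
    then have "x = 1" "y = 0"
      using x_eq_1 y_eq_0 by blast+
    then show False
      using \<open>a \<noteq> 1\<close> by (simp add: a complex_eq_iff)
  qed
  moreover have "s \<noteq> q"
  proof
    assume "s = q"
    then have "(1 - r) * x = 0" "(1 - r) * y = 0"
      by (simp_all add: s_eq q_eq)
    then have "x = 0" "y = 0"
      using r by simp_all
    then show False
      using \<open>a \<noteq> 0\<close> by (simp add: a complex_eq_iff)
  qed
  ultimately show ?thesis
    unfolding q_def[symmetric] s_def[symmetric] by auto
qed

definition cell_laplacian :: "complex \<Rightarrow> real \<Rightarrow> (complex \<Rightarrow> real) \<Rightarrow> nat list \<Rightarrow> complex \<Rightarrow> real" where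
  "cell_laplacian a h f w p = (1 / rw h w) *
     (\<Sum>i<3. if pw a w i = p then (\<Sum>j<3. Dmat h i j * f (pw a w j)) else 0)"

lemma Hm_eq_sum_cell_laplacian: "Hm a h m f p = (\<Sum>w\<in>words m. cell_laplacian a h f w p)"
  by (simp add: Hm_def cell_laplacian_def)

lemma sum_lessThan_3: "(\<Sum>i<3::nat. g i) = g 0 + g 1 + (g 2 :: 'a :: comm_monoid_add)"
  by (simp add: numeral_3_eq_3 numeral_2_eq_2 lessThan_Suc add.commute add.left_commute)

lemma cell_laplacian_refine:
  assumes "0 < cmod a" "cmod a < 1" "0 < cmod (1 - a)" "cmod (1 - a) < 1" "h > 1"
    and "u (pw a (w @ [1]) 0) = (1 - 1 / h\<^sup>2) * u (pw a w 1) + (1 / h\<^sup>2) * u (pw a w 2)"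
    and "u (pw a (w @ [2]) 0) = u (pw a (w @ [1]) 0)"
  shows "cell_laplacian a h u (w @ [1]) p + cell_laplacian a h u (w @ [2]) p = cell_laplacian a h u w p"
proof -
  define F where "F = hataFw a w"
  define q where "q = hataF a 1 a"
  define s where "s = hataF a 2 a"
  have "inj F"
    unfolding F_def using assms(1,2) by (intro inj_hataFw) auto
  moreover have "distinct [a, 0, 1, q, s]"
    unfolding q_def s_def by (rule level1_points_distinct[OF assms(1-4)])
  ultimately have F_distinct: "distinct [F a, F 0, F 1, F q, F s]"
    by (simp add: inj_eq)
  have pts: "pw a w 0 = F a" "pw a w 1 = F 0" "pw a w 2 = F 1"
    "pw a (w @ [1]) 0 = F q" "pw a (w @ [1]) 1 = F 0" "pw a (w @ [1]) 2 = F a"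
    "pw a (w @ [2]) 0 = F s" "pw a (w @ [2]) 1 = F q" "pw a (w @ [2]) 2 = F 1"
    by (simp_all add: pw_def[of a w] pw_snoc F_def q_def s_def bpt_def hataF_def complex_norm_square
        del: of_real_power)
  have u_new: "u (F q) = (1 - 1 / h\<^sup>2) * u (F 0) + (1 / h\<^sup>2) * u (F 1)" "u (F s) = u (F q)"
    using assms(6,7) unfolding pts by simp_all
  have nonzero: "rw h w \<noteq> 0" "h\<^sup>2 \<noteq> 1"
    using assms(5) by (simp_all add: rw_nonzero abs_square_eq_1)
  have rw_children: "rw h (w @ [1]) = rw h w / h" "rw h (w @ [2]) = rw h w * (1 - 1 / h\<^sup>2)"
    by (simp_all add: rw_snoc rfac_def)
  \<comment> \<open>the simplifier uses each disequality in one orientation only\<close>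
  have F_distinct_rev: "distinct (rev [F a, F 0, F 1, F q, F s])"
    using F_distinct by (simp only: distinct_rev)
  consider "p = F a" | "p = F 0" | "p = F 1" | "p = F q" | "p = F s" | "\<forall>x\<in>{a, 0, 1, q, s}. F x \<noteq> p"
    by blast
  then show ?thesis
    unfolding cell_laplacian_def sum_lessThan_3 pts rw_children
    using F_distinct F_distinct_rev nonzero assms(5)
    by cases (simp_all add: Dmat_def u_new, simp_all add: field_simps power2_eq_square)
qed

lemma Hm_Suc_eq_sum_children:
  "Hm a h (Suc m) f p =
     (\<Sum>w\<in>words m. cell_laplacian a h f (w @ [1]) p + cell_laplacian a h f (w @ [2]) p)"
proof -
  have inj: "inj_on (\<lambda>w. w @ [k]) (words m)" for k :: nat
    by (rule inj_onI) simp
  have "(\<lambda>w. w @ [1::nat]) ` words m \<inter> (\<lambda>w. w @ [2]) ` words m = {}"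
    by auto
  then have "Hm a h (Suc m) f p =
      (\<Sum>w\<in>(\<lambda>w. w @ [1]) ` words m. cell_laplacian a h f w p)
    + (\<Sum>w\<in>(\<lambda>w. w @ [2]) ` words m. cell_laplacian a h f w p)"
    unfolding Hm_eq_sum_cell_laplacian words_Suc by (intro sum.union_disjoint) (simp_all add: finite_words)
  also have "\<dots> = (\<Sum>w\<in>words m. cell_laplacian a h f (w @ [1]) p)
                  + (\<Sum>w\<in>words m. cell_laplacian a h f (w @ [2]) p)"
    by (simp add: sum.reindex[OF inj])
  finally show ?thesis
    by (simp add: sum.distrib)
qed

lemma Hm_eq_0_if_notin_Vm:
  assumes "p \<notin> Vm a m"
  shows "Hm a h m f p = 0"
proof -
  have "pw a w i \<noteq> p" if "w \<in> words m" "i < 3" for w i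
  proof -
    have "i \<in> {0, 1, 2}"
      using that(2) by (auto simp: numeral_3_eq_3 less_Suc_eq)
    then show ?thesis
      using assms that(1) unfolding Vm_def by blast
  qed
  then show ?thesis
    by (simp add: Hm_def)
qed

theorem mainTheorem1:
  fixes \<alpha> :: complex and h :: real and m :: nat and u :: "complex \<Rightarrow> real"
  assumes "0 < cmod \<alpha>" and "cmod \<alpha> < 1"
    and "0 < cmod (1 - \<alpha>)" and "cmod (1 - \<alpha>) < 1"
    and "h > 1"
    and "harmonic_on_Vm \<alpha> h m u"
    and "\<forall>w \<in> words m. u (pw \<alpha> (w @ [1]) 0) =
            (1 - 1 / h\<^sup>2) * u (pw \<alpha> w 1) + (1 / h\<^sup>2) * u (pw \<alpha> w 2)"
    and "\<forall>w \<in> words m. u (pw \<alpha> (w @ [2]) 0) = u (pw \<alpha> (w @ [1]) 0)"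
  shows "harmonic_on_Vm \<alpha> h (Suc m) u"
  unfolding harmonic_on_Vm_def
proof
  fix p assume p: "p \<in> Vm \<alpha> (Suc m) - Vm \<alpha> 0"
  have "Hm \<alpha> h (Suc m) u p = Hm \<alpha> h m u p"
    unfolding Hm_Suc_eq_sum_children Hm_eq_sum_cell_laplacian[of \<alpha> h m]
    using cell_laplacian_refine[OF assms(1-5)] assms(7,8) by (intro sum.cong) auto
  also have "\<dots> = 0"
    using assms(6) p Hm_eq_0_if_notin_Vm unfolding harmonic_on_Vm_def by blast
  finally show "Hm \<alpha> h (Suc m) u p = 0" .
qed

end
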